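(* Let $n \ge 1$, let $\mathbf{W}_1, \mathbf{W}_2 \in \mathbb{R}^{n\times n}$, let $\mathbf{x}, \mathbf{y} \in \mathbb{R}^n$, and let $p \in [0,1]$ with $p \neq \tfrac12$. Define $$L_p^{AID} = \mathbb{E}\big[\|\mathbf{W}_2\, \mathrm{AID}_p(\mathbf{W}_1\mathbf{x}) - \mathbf{y}\|_2^2\big],\qquad L_p = \|\mathbf{W}_2\, r_p(\mathbf{W}_1\mathbf{x}) - \mathbf{y}\|_2^2,$$ $$R_p = \Big\|\mathbf{W}_2\big(\tfrac12 \mathbf{W}_1\mathbf{x}\big) - \mathbf{W}_2\, r_p(\mathbf{W}_1\mathbf{x})\Big\|_2^2,$$ where the expectation is over the randomness of $\mathrm{AID}_p$. Then $$L_p^{AID} \ge L_p + \frac{4p(1-p)}{n(2p-1)^2}\, R_p.$$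
   Context: For $\mathbf{v} = (v_1,\dots,v_n)\in\mathbb{R}^n$, $\mathrm{AID}_p(\mathbf{v})$ is the random vector with coordinates $\mathrm{AID}_p(\mathbf{v})_i = p_i v_i$ if $v_i \ge 0$ and $(1-p_i)v_i$ if $v_i<0$, where $p_1,\dots,p_n$ are independent $\mathrm{Bernoulli}(p)$ random variables (equivalently, dropout with rate $1-p$ on nonnegative entries and rate $p$ on negative entries, without rescaling). The modified leaky ReLU $r_p$ acts coordinatewise by $r_p(x) = \tfrac12 x + (p - \tfrac12)|x|$, i.e. $r_p(x) = p x$ for $x\ge 0$ and $(1-p)x$ for $x<0$ (this is the mean of $\mathrm{AID}_p$). $\|\cdot\|_2$ is the Euclidean norm. *)

theory Defs
  imports "HOL-Analysis.Analysis" "HOL-Probability.Probability"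
begin

text \<open>The mask b i = True means the Bernoulli variable p_i equals 1.\<close>
definition AID :: "('n::finite \<Rightarrow> bool) \<Rightarrow> real ^ 'n \<Rightarrow> real ^ 'n" where
  "AID b v = (\<chi> i. if v $ i \<ge> 0 then (if b i then 1 else 0) * v $ i
                      else (1 - (if b i then 1 else 0)) * v $ i)"

definition bern_mask :: "real \<Rightarrow> ('n::finite \<Rightarrow> bool) pmf" where
  "bern_mask p = Pi_pmf UNIV False (\<lambda>_. bernoulli_pmf p)"

definition rp :: "real \<Rightarrow> real \<Rightarrow> real" where
  "rp p x = x / 2 + (p - 1/2) * \<bar>x\<bar>"

definition rpv :: "real \<Rightarrow> real ^ 'n \<Rightarrow> real ^ 'n" where
  "rpv p v = (\<chi> i. rp p (v $ i))"

end

theory Submission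
  imports Defs
begin

text \<open>Since r_p is the mean of AID_p, the noise Z = AID_p(v) - r_p(v) is centred, and its
  coordinates are independent with variances p(1-p) v_i^2. Hence the expected loss equals the
  deterministic loss L_p plus p(1-p) \<Sum>_{j,i} (W_2)_ji^2 v_i^2. On the other hand
  r_p(v) = v/2 + (p - 1/2)|v| coordinatewise, so R_p = (p - 1/2)^2 ||W_2 |v|||^2, which Cauchy-Schwarz
  bounds by (p - 1/2)^2 n \<Sum>_{j,i} (W_2)_ji^2 v_i^2.\<close>

lemma expectation_square_sum_uncorrelated:
  fixes d :: "'i::finite \<Rightarrow> 'a \<Rightarrow> real"
  assumes fin: "finite (set_pmf M)"
    and uncorrelated: "\<And>i k. i \<noteq> k \<Longrightarrow> measure_pmf.expectation M (\<lambda>\<omega>. d i \<omega> * d k \<omega>) = 0"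
  shows "measure_pmf.expectation M (\<lambda>\<omega>. (\<Sum>i\<in>UNIV. w i * d i \<omega>)\<^sup>2)
       = (\<Sum>i\<in>UNIV. (w i)\<^sup>2 * measure_pmf.expectation M (\<lambda>\<omega>. (d i \<omega>)\<^sup>2))"
proof -
  have square: "(\<Sum>i\<in>UNIV. w i * d i \<omega>)\<^sup>2 = (\<Sum>i\<in>UNIV. \<Sum>k\<in>UNIV. w i * w k * (d i \<omega> * d k \<omega>))" for \<omega>
    by (simp add: power2_eq_square sum_product mult_ac)
  have "measure_pmf.expectation M (\<lambda>\<omega>. (\<Sum>i\<in>UNIV. w i * d i \<omega>)\<^sup>2)
      = (\<Sum>i\<in>UNIV. \<Sum>k\<in>UNIV. w i * w k * measure_pmf.expectation M (\<lambda>\<omega>. d i \<omega> * d k \<omega>))"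
    unfolding square using fin by (simp add: integrable_measure_pmf_finite)
  also have "\<dots> = (\<Sum>i\<in>UNIV. w i * w i * measure_pmf.expectation M (\<lambda>\<omega>. d i \<omega> * d i \<omega>))"
  proof (intro sum.cong refl)
    fix i
    show "(\<Sum>k\<in>UNIV. w i * w k * measure_pmf.expectation M (\<lambda>\<omega>. d i \<omega> * d k \<omega>))
        = w i * w i * measure_pmf.expectation M (\<lambda>\<omega>. d i \<omega> * d i \<omega>)"
      using uncorrelated by (subst sum.remove[of UNIV i]) auto
  qed
  finally show ?thesis by (simp add: power2_eq_square)
qed

lemma power2_norm_vec: "(norm (x :: real ^ 'n))\<^sup>2 = (\<Sum>i\<in>UNIV. (x $ i)\<^sup>2)"
  unfolding power2_norm_eq_inner inner_vec_def by (simp add: power2_eq_square)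

lemma expectation_power2_norm_add_centered:
  fixes Z :: "'a \<Rightarrow> real ^ 'n" and A :: "real ^ 'n ^ 'm"
  assumes fin: "finite (set_pmf M)"
    and centered: "\<And>i. measure_pmf.expectation M (\<lambda>\<omega>. Z \<omega> $ i) = 0"
  shows "measure_pmf.expectation M (\<lambda>\<omega>. (norm (c + A *v Z \<omega>))\<^sup>2)
       = (norm c)\<^sup>2 + measure_pmf.expectation M (\<lambda>\<omega>. (norm (A *v Z \<omega>))\<^sup>2)"
proof -
  have cross: "measure_pmf.expectation M (\<lambda>\<omega>. c \<bullet> (A *v Z \<omega>)) = 0"
    using fin centered
    by (simp add: inner_vec_def matrix_vector_mult_def integrable_measure_pmf_finite
        flip: sum_distrib_left)
  have "(norm (c + A *v Z \<omega>))\<^sup>2 = (norm c)\<^sup>2 + 2 * (c \<bullet> (A *v Z \<omega>)) + (norm (A *v Z \<omega>))\<^sup>2" for \<omega>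
    by (simp add: power2_norm_eq_inner inner_add inner_commute)
  then show ?thesis
    using fin cross by (simp add: integrable_measure_pmf_finite)
qed

lemma expectation_power2_norm_matrix_uncorrelated:
  fixes Z :: "'a \<Rightarrow> real ^ 'n" and A :: "real ^ 'n ^ 'm"
  assumes fin: "finite (set_pmf M)"
    and uncorrelated: "\<And>i k. i \<noteq> k \<Longrightarrow> measure_pmf.expectation M (\<lambda>\<omega>. Z \<omega> $ i * Z \<omega> $ k) = 0"
  shows "measure_pmf.expectation M (\<lambda>\<omega>. (norm (A *v Z \<omega>))\<^sup>2)
       = (\<Sum>j\<in>UNIV. \<Sum>i\<in>UNIV. (A $ j $ i)\<^sup>2 * measure_pmf.expectation M (\<lambda>\<omega>. (Z \<omega> $ i)\<^sup>2))"
  using fin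
  by (simp add: power2_norm_vec matrix_vector_mult_def integrable_measure_pmf_finite
      expectation_square_sum_uncorrelated[OF fin uncorrelated])

lemma power2_norm_matrix_vector_le:
  fixes A :: "real ^ 'n ^ 'm"
  shows "(norm (A *v x))\<^sup>2 \<le> real CARD('n) * (\<Sum>j\<in>UNIV. \<Sum>i\<in>UNIV. (A $ j $ i)\<^sup>2 * (x $ i)\<^sup>2)"
proof -
  have "(norm (A *v x))\<^sup>2 \<le> (\<Sum>j\<in>UNIV. (\<Sum>i\<in>UNIV. (A $ j $ i * x $ i)\<^sup>2) * real CARD('n))"
    unfolding power2_norm_vec matrix_vector_mult_def
    by (simp add: sum_mono sum_squared_le_sum_of_squares)
  then show ?thesis
    by (simp add: sum_distrib_left sum_distrib_right power_mult_distrib mult_ac)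
qed

definition aid_scalar :: "bool \<Rightarrow> real \<Rightarrow> real" where
  "aid_scalar c x = (if c = (0 \<le> x) then x else 0)"

lemma AID_component: "AID b v $ i = aid_scalar (b i) (v $ i)"
  by (simp add: AID_def aid_scalar_def)

lemma expectation_aid_scalar:
  assumes "0 \<le> p" "p \<le> 1"
  shows "measure_pmf.expectation (bernoulli_pmf p) (\<lambda>c. aid_scalar c x) = rp p x"
  using assms by (simp add: aid_scalar_def rp_def field_simps)

lemma variance_aid_scalar:
  assumes "0 \<le> p" "p \<le> 1"
  shows "measure_pmf.expectation (bernoulli_pmf p) (\<lambda>c. (aid_scalar c x - rp p x)\<^sup>2)
       = p * (1 - p) * x\<^sup>2"
  using assms by (simp add: aid_scalar_def rp_def power2_eq_square field_simps)

lemma expectation_bern_mask_component: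
  fixes f :: "bool \<Rightarrow> real"
  shows "measure_pmf.expectation (bern_mask p) (\<lambda>b. f (b i)) = measure_pmf.expectation (bernoulli_pmf p) f"
proof -
  have "map_pmf (\<lambda>b. b i) (bern_mask p) = bernoulli_pmf p"
    unfolding bern_mask_def by (subst Pi_pmf_component) auto
  then show ?thesis
    using integral_map_pmf[of "\<lambda>b. b i" "bern_mask p" f] by simp
qed

lemma expectation_bern_mask_mult_independent:
  fixes f g :: "bool \<Rightarrow> real"
  assumes "i \<noteq> k"
  shows "measure_pmf.expectation (bern_mask p) (\<lambda>b. f (b i) * g (b k))
       = measure_pmf.expectation (bern_mask p) (\<lambda>b. f (b i))
         * measure_pmf.expectation (bern_mask p) (\<lambda>b. g (b k))"
proof -
  let ?M = "measure_pmf (bern_mask p)"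
  have "prob_space.indep_vars ?M (\<lambda>_. count_space UNIV) (\<lambda>j b. b j) UNIV"
    unfolding bern_mask_def by (rule indep_vars_Pi_pmf) simp
  then have "prob_space.indep_vars ?M (\<lambda>_. borel) (\<lambda>j b. (if j = i then f else g) (b j)) UNIV"
    by (rule prob_space.indep_vars_compose2[OF measure_pmf.prob_space_axioms]) simp
  then have "prob_space.indep_vars ?M (\<lambda>_. borel) (\<lambda>j b. (if j = i then f else g) (b j)) {i, k}"
    by (rule prob_space.indep_vars_subset[OF measure_pmf.prob_space_axioms]) simp
  then have "measure_pmf.expectation (bern_mask p) (\<lambda>b. \<Prod>j\<in>{i, k}. (if j = i then f else g) (b j))
      = (\<Prod>j\<in>{i, k}. measure_pmf.expectation (bern_mask p) (\<lambda>b. (if j = i then f else g) (b j)))"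
    by (intro prob_space.indep_vars_lebesgue_integral[OF measure_pmf.prob_space_axioms])
      (auto intro: integrable_measure_pmf_finite)
  then show ?thesis
    using assms by simp
qed

lemma expectation_AID_component:
  assumes "0 \<le> p" "p \<le> 1"
  shows "measure_pmf.expectation (bern_mask p) (\<lambda>b. AID b v $ i) = rpv p v $ i"
  using expectation_bern_mask_component[of p "\<lambda>c. aid_scalar c (v $ i)" i]
    expectation_aid_scalar[OF assms]
  by (simp add: AID_component rpv_def)

lemma variance_AID_component:
  assumes "0 \<le> p" "p \<le> 1"
  shows "measure_pmf.expectation (bern_mask p) (\<lambda>b. (AID b v $ i - rpv p v $ i)\<^sup>2)
       = p * (1 - p) * (v $ i)\<^sup>2"
  using expectation_bern_mask_component[of p "\<lambda>c. (aid_scalar c (v $ i) - rp p (v $ i))\<^sup>2" i]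
    variance_aid_scalar[OF assms]
  by (simp add: AID_component rpv_def)

lemma AID_components_uncorrelated:
  assumes "0 \<le> p" "p \<le> 1" "i \<noteq> k"
  shows "measure_pmf.expectation (bern_mask p)
           (\<lambda>b. (AID b v $ i - rpv p v $ i) * (AID b v $ k - rpv p v $ k)) = 0"
proof -
  define noise where "noise = (\<lambda>j c. aid_scalar c (v $ j) - rp p (v $ j))"
  have "measure_pmf.expectation (bernoulli_pmf p) (noise j) = 0" for j
    using expectation_aid_scalar[OF assms(1,2), of "v $ j"]
    by (simp add: noise_def integrable_measure_pmf_finite)
  then have "measure_pmf.expectation (bern_mask p) (\<lambda>b. noise j (b j)) = 0" for j
    by (simp add: expectation_bern_mask_component)
  then show ?thesis
    using expectation_bern_mask_mult_independent[OF assms(3), where f = "noise i" and g = "noise k"]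
    by (simp add: noise_def AID_component rpv_def)
qed

lemma expectation_loss_AID:
  fixes W :: "real ^ 'n ^ 'm"
  assumes "0 \<le> p" "p \<le> 1"
  shows "measure_pmf.expectation (bern_mask p) (\<lambda>b. (norm (W *v AID b v - y))\<^sup>2)
       = (norm (W *v rpv p v - y))\<^sup>2 + p * (1 - p) * (\<Sum>j\<in>UNIV. \<Sum>i\<in>UNIV. (W $ j $ i)\<^sup>2 * (v $ i)\<^sup>2)"
proof -
  define Z where "Z b = AID b v - rpv p v" for b
  have fin: "finite (set_pmf (bern_mask p :: ('n \<Rightarrow> bool) pmf))"
    by simp
  have centered: "measure_pmf.expectation (bern_mask p) (\<lambda>b. Z b $ i) = 0" for i
    using expectation_AID_component[OF assms] by (simp add: Z_def integrable_measure_pmf_finite)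
  have decompose: "W *v AID b v - y = (W *v rpv p v - y) + W *v Z b" for b
    by (simp add: Z_def algebra_simps)
  have "measure_pmf.expectation (bern_mask p) (\<lambda>b. (norm (W *v AID b v - y))\<^sup>2)
      = (norm (W *v rpv p v - y))\<^sup>2 + measure_pmf.expectation (bern_mask p) (\<lambda>b. (norm (W *v Z b))\<^sup>2)"
    unfolding decompose by (rule expectation_power2_norm_add_centered[OF fin centered])
  also have "measure_pmf.expectation (bern_mask p) (\<lambda>b. (norm (W *v Z b))\<^sup>2)
      = (\<Sum>j\<in>UNIV. \<Sum>i\<in>UNIV. (W $ j $ i)\<^sup>2 * measure_pmf.expectation (bern_mask p) (\<lambda>b. (Z b $ i)\<^sup>2))"
    by (rule expectation_power2_norm_matrix_uncorrelated[OF fin])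
      (simp add: Z_def AID_components_uncorrelated assms)
  also have "\<dots> = p * (1 - p) * (\<Sum>j\<in>UNIV. \<Sum>i\<in>UNIV. (W $ j $ i)\<^sup>2 * (v $ i)\<^sup>2)"
    by (simp add: Z_def variance_AID_component assms sum_distrib_left mult_ac)
  finally show ?thesis .
qed

lemma rpv_eq_half_plus_abs: "rpv p v = (1/2) *\<^sub>R v + (p - 1/2) *\<^sub>R (\<chi> i. \<bar>v $ i\<bar>)"
  by (simp add: rpv_def rp_def vec_eq_iff)

lemma power2_norm_half_minus_rpv_le:
  fixes W :: "real ^ 'n ^ 'm"
  shows "(norm (W *v ((1/2) *\<^sub>R v) - W *v rpv p v))\<^sup>2
       \<le> (p - 1/2)\<^sup>2 * (real CARD('n) * (\<Sum>j\<in>UNIV. \<Sum>i\<in>UNIV. (W $ j $ i)\<^sup>2 * (v $ i)\<^sup>2))"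
proof -
  have "W *v ((1/2) *\<^sub>R v) - W *v rpv p v = - ((p - 1/2) *\<^sub>R (W *v (\<chi> i. \<bar>v $ i\<bar>)))"
    by (simp add: rpv_eq_half_plus_abs algebra_simps)
  then have "(norm (W *v ((1/2) *\<^sub>R v) - W *v rpv p v))\<^sup>2
      = (p - 1/2)\<^sup>2 * (norm (W *v (\<chi> i. \<bar>v $ i\<bar>)))\<^sup>2"
    by (simp add: power_mult_distrib)
  also have "\<dots> \<le> (p - 1/2)\<^sup>2 * (real CARD('n) * (\<Sum>j\<in>UNIV. \<Sum>i\<in>UNIV. (W $ j $ i)\<^sup>2 * (v $ i)\<^sup>2))"
    using power2_norm_matrix_vector_le[of W "\<chi> i. \<bar>v $ i\<bar>"] by (simp add: mult_left_mono)
  finally show ?thesis .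
qed

theorem theorem1:
  fixes W1 W2 :: "real ^ 'n ^ 'n" and x y :: "real ^ 'n" and p :: real
  assumes "0 \<le> p" "p \<le> 1" "p \<noteq> 1/2"
  shows "measure_pmf.expectation (bern_mask p :: ('n \<Rightarrow> bool) pmf)
           (\<lambda>b. (norm (W2 *v AID b (W1 *v x) - y))\<^sup>2)
         \<ge> (norm (W2 *v rpv p (W1 *v x) - y))\<^sup>2
           + 4 * p * (1 - p) / (real CARD('n) * (2 * p - 1)\<^sup>2)
             * (norm (W2 *v ((1/2) *\<^sub>R (W1 *v x)) - W2 *v rpv p (W1 *v x)))\<^sup>2"
proof -
  define v where "v = W1 *v x"
  define T where "T = (\<Sum>j\<in>UNIV. \<Sum>i\<in>UNIV. (W2 $ j $ i)\<^sup>2 * (v $ i)\<^sup>2)"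
  define c where "c = 4 * p * (1 - p) / (real CARD('n) * (2 * p - 1)\<^sup>2)"
  have "c \<ge> 0"
    using assms(1,2) by (simp add: c_def)
  then have "c * (norm (W2 *v ((1/2) *\<^sub>R v) - W2 *v rpv p v))\<^sup>2 \<le> c * ((p - 1/2)\<^sup>2 * (real CARD('n) * T))"
    unfolding T_def by (intro mult_left_mono power2_norm_half_minus_rpv_le)
  also have "\<dots> = p * (1 - p) * T"
  proof -
    have "(p - 1/2)\<^sup>2 = (2 * p - 1)\<^sup>2 / 4"
      by (simp add: power2_eq_square field_simps)
    moreover have "(2 * p - 1)\<^sup>2 \<noteq> 0"
      using assms(3) by simp
    ultimately show ?thesis
      unfolding c_def by (simp add: field_simps)
  qed
  finally have "c * (norm (W2 *v ((1/2) *\<^sub>R v) - W2 *v rpv p v))\<^sup>2 \<le> p * (1 - p) * T" .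
  moreover have "measure_pmf.expectation (bern_mask p) (\<lambda>b. (norm (W2 *v AID b v - y))\<^sup>2)
      = (norm (W2 *v rpv p v - y))\<^sup>2 + p * (1 - p) * T"
    unfolding T_def by (rule expectation_loss_AID[OF assms(1,2)])
  ultimately show ?thesis
    unfolding v_def[symmetric] c_def[symmetric] by linarith
qed

end
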